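(* Let $A$ and $B$ be two mobile sensor networks in a domain $D$ over the time interval $I=[0,1]$, such that the uncovered region of $A$ contains an evasion path but the uncovered region of $B$ does not. Then the uncovered regions of $A$ and $B$ are not time-varying homotopy equivalent.
   Context: A mobile sensor network in a bounded domain $D\subseteq\mathbb{R}^d$ homeomorphic to a closed ball consists of finitely many sensors with continuously varying positions $z(t)\in D$, $t\in I$, each covering an open ball $B(z(t),r)$; the covered region at time $t$ is $X_t=\big(\bigcup_z B(z(t),r)\big)\cap D$ and the covered region in spacetime is $X=\bigcup_t X_t\times\{t\}\subseteq D\times I$; the uncovered region is $X^c=(D\times I)\setminus X$, regarded as a time-varying space via projection to $I$. An evasion path is a continuous $p\colon I\to D$ with $(p(t),t)\in X^c$ for all $t\in I$. A time-varying space is a topological space with a continuous map $q$ to $I$; a time-varying map is a continuous map $f$ with $f(q_X^{-1}(t))\subseteq q_Y^{-1}(t)$ for all $t$. For $Z$ a time-varying space, $Z\times[0,1]$ is a time-varying space via $(z,j)\mapsto q(z)$; time-varying maps $h,k\colon Z\to W$ are time-varying homotopic if there is a time-varying map $F\colon Z\times[0,1]\to W$ with $F(\cdot,0)=h$, $F(\cdot,1)=k$. Time-varying spaces $X,Y$ are time-varying homotopy equivalent if there exist time-varying maps $f\colon X\to Y$, $g\colon Y\to X$ with $g\circ f$ time-varying homotopic to $\mathrm{id}_X$ and $f\circ g$ time-varying homotopic to $\mathrm{id}_Y$. *)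

theory Defs
  imports "HOL-Analysis.Analysis"
begin

definition sensor_network :: "'a::euclidean_space set \<Rightarrow> (real \<Rightarrow> 'a) set \<Rightarrow> real \<Rightarrow> bool" where
  "sensor_network D S r \<longleftrightarrow> finite S \<and> r > 0 \<and>
     (\<forall>z\<in>S. continuous_on {0..1} z \<and> (\<forall>t\<in>{0..1}. z t \<in> D))"

definition covered_region :: "'a::euclidean_space set \<Rightarrow> (real \<Rightarrow> 'a) set \<Rightarrow> real \<Rightarrow> ('a \<times> real) set" where
  "covered_region D S r = {(x, t). t \<in> {0..1} \<and> x \<in> (\<Union>z\<in>S. ball (z t) r) \<inter> D}"

definition uncovered_region :: "'a::euclidean_space set \<Rightarrow> (real \<Rightarrow> 'a) set \<Rightarrow> real \<Rightarrow> ('a \<times> real) set" where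
  "uncovered_region D S r = (D \<times> {0..1}) - covered_region D S r"

definition evasion_path :: "('a::euclidean_space \<times> real) set \<Rightarrow> (real \<Rightarrow> 'a) \<Rightarrow> bool" where
  "evasion_path Xc p \<longleftrightarrow> continuous_on {0..1} p \<and> (\<forall>t\<in>{0..1}. (p t, t) \<in> Xc)"

text \<open>Time-varying spaces are subsets of a product with the real line, time map = snd.
  A time-varying map is a continuous map preserving the time coordinate.\<close>
definition tv_map :: "('a::topological_space \<times> real) set \<Rightarrow> ('b::topological_space \<times> real) set
    \<Rightarrow> ('a \<times> real \<Rightarrow> 'b \<times> real) \<Rightarrow> bool" where
  "tv_map X Y f \<longleftrightarrow> continuous_on X f \<and> f ` X \<subseteq> Y \<and> (\<forall>p\<in>X. snd (f p) = snd p)"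

definition tv_homotopic :: "('a::topological_space \<times> real) set \<Rightarrow> ('b::topological_space \<times> real) set
    \<Rightarrow> ('a \<times> real \<Rightarrow> 'b \<times> real) \<Rightarrow> ('a \<times> real \<Rightarrow> 'b \<times> real) \<Rightarrow> bool" where
  "tv_homotopic X Y h k \<longleftrightarrow>
     (\<exists>F :: ('a \<times> real) \<times> real \<Rightarrow> 'b \<times> real.
        continuous_on (X \<times> {0..1}) F \<and> F ` (X \<times> {0..1}) \<subseteq> Y \<and>
        (\<forall>p\<in>X. \<forall>s\<in>{0..1}. snd (F (p, s)) = snd p) \<and>
        (\<forall>p\<in>X. F (p, 0) = h p \<and> F (p, 1) = k p))"

definition tv_homotopy_equivalent :: "('a::topological_space \<times> real) set \<Rightarrow> ('b::topological_space \<times> real) set \<Rightarrow> bool" where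
  "tv_homotopy_equivalent X Y \<longleftrightarrow>
     (\<exists>f g. tv_map X Y f \<and> tv_map Y X g \<and>
        tv_homotopic X X (g \<circ> f) id \<and> tv_homotopic Y Y (f \<circ> g) id)"

end

theory Submission
  imports Defs
begin

text \<open>A time-varying map sends the graph \<open>t \<mapsto> (p t, t)\<close> of an evasion path to the graph of
  another one, because it preserves time. Hence the existence of an evasion path is invariant
  under time-varying homotopy equivalence (only the maps, not the homotopies, are needed).\<close>

lemma evasion_path_tv_map_image:
  fixes X Y :: "('a::euclidean_space \<times> real) set"
  assumes f: "tv_map X Y f" and p: "evasion_path X p"
  shows "evasion_path Y (\<lambda>t. fst (f (p t, t)))"
proof -
  have graph_cont: "continuous_on {0..1} (\<lambda>t. (p t, t))"
    using p unfolding evasion_path_def by (intro continuous_intros) auto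
  have graph_in_X: "(\<lambda>t. (p t, t)) ` {0..1} \<subseteq> X"
    using p unfolding evasion_path_def by auto
  have "continuous_on {0..1} (f \<circ> (\<lambda>t. (p t, t)))"
    using f graph_cont graph_in_X unfolding tv_map_def
    by (metis continuous_on_compose continuous_on_subset)
  then have "continuous_on {0..1} (\<lambda>t. fst (f (p t, t)))"
    by (auto simp: o_def intro: continuous_on_fst)
  moreover have "(fst (f (p t, t)), t) \<in> Y" if "t \<in> {0..1}" for t
  proof -
    have "(p t, t) \<in> X"
      using graph_in_X that by blast
    then have "f (p t, t) \<in> Y" "snd (f (p t, t)) = t"
      using f unfolding tv_map_def by auto
    then show ?thesis by (metis prod.collapse)
  qed
  ultimately show ?thesis unfolding evasion_path_def by blast
qed

lemma tv_homotopy_equivalent_evasion_path_iff: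
  fixes X Y :: "('a::euclidean_space \<times> real) set"
  assumes "tv_homotopy_equivalent X Y"
  shows "(\<exists>p. evasion_path X p) \<longleftrightarrow> (\<exists>q. evasion_path Y q)"
  using assms evasion_path_tv_map_image unfolding tv_homotopy_equivalent_def by meson

theorem corollary5p4:
  fixes D :: "'a::euclidean_space set"
    and SA SB :: "(real \<Rightarrow> 'a) set" and rA rB :: real
  assumes "D homeomorphic cball (0::'a) 1"
    and "sensor_network D SA rA"
    and "sensor_network D SB rB"
    and "\<exists>p. evasion_path (uncovered_region D SA rA) p"
    and "\<not> (\<exists>p. evasion_path (uncovered_region D SB rB) p)"
  shows "\<not> tv_homotopy_equivalent (uncovered_region D SA rA) (uncovered_region D SB rB)"
  using assms(4,5) tv_homotopy_equivalent_evasion_path_iff by blast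

end
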